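(* Let $0<\alpha<1$, $\lambda\ge 0$, $v>0$, $D>0$, $T>0$, $L>0$, integers $n\ge 1$, $K\ge 2$, grading exponent $r\ge 1$, and let $h=L/K$, $x_i=ih$, $t_j=(j/n)^rT$, $\tau_j=t_{j+1}-t_j$. Consider the implicit scheme: for $i=1,\ldots,K-1$, $l=1,\ldots,n$, $$\frac{1}{\Gamma(2-\alpha)}\sum_{j=0}^{l-1} \tau_{j}^{-\alpha}a_{j,l}\left(Y_i^{j+1}-Y_i^{j}\right)=-v \frac{Y_{i+1}^l-Y_{i-1}^l}{2h}+D\frac{Y_{i+1}^l-2Y_{i}^l+Y_{i-1}^l}{h^2}+e^{\lambda t_l}f_i^l,$$ with $Y_0^l=Y_K^l=0$ for $l=1,\ldots,n$ and initial values $Y_i^0=g(x_i)$, $i=1,\ldots,K-1$, where $$a_{j,k}=\left( \frac{k^r-j^r}{(j+1)^r-j^r}\right)^{1-\alpha}-\left(\frac{k^r-(j+1)^r}{(j+1)^r-j^r}\right)^{1-\alpha}.$$ If $h<\frac{2D}{v}$, then the scheme is stable in the following sense: if $(Y_i^l)$ and $(\tilde Y_i^l)$ are the solutions of the scheme corresponding to initial data $g$ and $\tilde g$ respectively (with the same $f_i^l$), and $\epsilon_i^l=Y_i^l-\tilde Y_i^l$, $\|E^l\|_\infty=\max_{1\le i\le K-1}|\epsilon_i^l|$, then $\|E^l\|_\infty\le \|E^0\|_\infty$ for all $l=1,\ldots,n$.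
   Context: The scheme approximates the solution $y$ of $D_t^{\alpha}y=-v\,\partial_x y+D\,\partial_x^2 y+e^{\lambda t}f(x,t)$ on $(0,L)\times(0,T]$, $y(x,0)=g(x)$, $y(0,t)=y(L,t)=0$, where $D_t^\alpha$ is the Caputo derivative $D_t^\alpha y(t)=\frac{1}{\Gamma(1-\alpha)}\int_0^t (t-s)^{-\alpha}y'(s)\,ds$; here $f_i^l=f(x_i,t_l)$ and $f,g$ are continuous. The function $u=e^{-\lambda t}y$ then solves the tempered problem $\mathbb{D}_t^{\alpha,\lambda}u=-v\partial_xu+D\partial_x^2u+f$ with tempered Caputo derivative $\mathbb{D}_t^{\alpha,\lambda}u=e^{-\lambda t}D_t^\alpha(e^{\lambda t}u)$. *)

theory Defs
  imports "HOL-Analysis.Analysis"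
begin

definition tgrid :: "real \<Rightarrow> nat \<Rightarrow> real \<Rightarrow> nat \<Rightarrow> real" where
  "tgrid T n r j = (real j / real n) powr r * T"

definition tstep :: "real \<Rightarrow> nat \<Rightarrow> real \<Rightarrow> nat \<Rightarrow> real" where
  "tstep T n r j = tgrid T n r (Suc j) - tgrid T n r j"

definition xgrid :: "real \<Rightarrow> nat \<Rightarrow> nat \<Rightarrow> real" where
  "xgrid L K i = real i * (L / real K)"

definition acoef :: "real \<Rightarrow> real \<Rightarrow> nat \<Rightarrow> nat \<Rightarrow> real" where
  "acoef \<alpha> r j k =
     ((real k powr r - real j powr r) / (real (Suc j) powr r - real j powr r)) powr (1 - \<alpha>)
   - ((real k powr r - real (Suc j) powr r) / (real (Suc j) powr r - real j powr r)) powr (1 - \<alpha>)"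

text \<open>Y (indexed Y i l, space index i, time index l) solves the implicit scheme
  with source values f(x_i,t_l) and initial data g.\<close>
definition scheme_sol ::
  "real \<Rightarrow> real \<Rightarrow> real \<Rightarrow> real \<Rightarrow> real \<Rightarrow> real \<Rightarrow> nat \<Rightarrow> nat \<Rightarrow> real
   \<Rightarrow> (real \<Rightarrow> real \<Rightarrow> real) \<Rightarrow> (real \<Rightarrow> real) \<Rightarrow> (nat \<Rightarrow> nat \<Rightarrow> real) \<Rightarrow> bool" where
  "scheme_sol \<alpha> lam v D T L n K r f g Y \<longleftrightarrow>
     (\<forall>l\<in>{1..n}. Y 0 l = 0 \<and> Y K l = 0) \<and>
     (\<forall>i\<in>{1..K-1}. Y i 0 = g (xgrid L K i)) \<and>
     (\<forall>i\<in>{1..K-1}. \<forall>l\<in>{1..n}.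
        (1 / Gamma (2 - \<alpha>)) *
          (\<Sum>j<l. tstep T n r j powr (-\<alpha>) * acoef \<alpha> r j l * (Y i (Suc j) - Y i j))
        = - v * (Y (i+1) l - Y (i-1) l) / (2 * (L / real K))
          + D * (Y (i+1) l - 2 * Y i l + Y (i-1) l) / (L / real K)^2
          + exp (lam * tgrid T n r l) * f (xgrid L K i) (tgrid T n r l))"

definition errnorm :: "nat \<Rightarrow> (nat \<Rightarrow> nat \<Rightarrow> real) \<Rightarrow> (nat \<Rightarrow> nat \<Rightarrow> real) \<Rightarrow> nat \<Rightarrow> real" where
  "errnorm K Y Y' l = Max ((\<lambda>i. \<bar>Y i l - Y' i l\<bar>) ` {1..K-1})"

end

theory Submission
  imports Defs
begin

text \<open>Subtracting the two schemes, the error \<open>\<epsilon>\<close> solves the scheme with zero source.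
  On the graded mesh the weight \<open>c\<^sub>j\<close> of the increment \<open>\<epsilon>\<^sup>j\<^sup>+\<^sup>1 - \<epsilon>\<^sup>j\<close> at level \<open>l\<close> is a
  positive multiple of a secant slope of the concave function \<open>s \<mapsto> s\<^sup>1\<^sup>-\<^sup>\<alpha>\<close> over
  \<open>[l\<^sup>r - (j+1)\<^sup>r, l\<^sup>r - j\<^sup>r]\<close>, so the weights are positive and nondecreasing in \<open>j\<close>.
  Summation by parts therefore writes the discrete Caputo derivative as \<open>c\<^sub>l\<^sub>-\<^sub>1 \<epsilon>\<^sup>l\<close>
  minus a combination of earlier errors whose nonnegative coefficients add up to \<open>c\<^sub>l\<^sub>-\<^sub>1\<close>.
  For \<open>h < 2D/v\<close> both neighbour coefficients of the central difference operator are
  nonnegative, so at a node where \<open>|\<epsilon>\<^sup>l|\<close> is maximal the equation yields a discrete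
  maximum principle \<open>\<parallel>E\<^sup>l\<parallel> \<le> max\<^sub>j\<^sub><\<^sub>l \<parallel>E\<^sup>j\<parallel>\<close>; induction on \<open>l\<close> concludes.\<close>

lemma powr_le_tangent:
  fixes b q x :: real
  assumes "0 < b" "b < 1" "0 < q" "0 \<le> x"
  shows "x powr b \<le> q powr b + b * q powr (b - 1) * (x - q)"
proof (cases "x = 0")
  case True
  have "q powr (b - 1) * q = q powr b"
    using assms by (simp add: powr_diff)
  moreover have "b * q powr b \<le> q powr b"
    using mult_right_mono[of b 1 "q powr b"] assms by simp
  ultimately show ?thesis
    using True by (simp add: algebra_simps)
next
  case False
  have young: "x powr b * q powr (1 - b) \<le> b * x + (1 - b) * q"
    using Youngs_inequality_0[of b "1 - b" x q] assms False by simp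
  have "q powr (1 - b) * q powr (b - 1) = 1"
    using assms by (simp flip: powr_add)
  then have "x powr b = x powr b * q powr (1 - b) * q powr (b - 1)"
    by (simp add: mult.assoc)
  also have "\<dots> \<le> (b * x + (1 - b) * q) * q powr (b - 1)"
    using young by (simp add: mult_right_mono)
  also have "\<dots> = q powr b + b * q powr (b - 1) * (x - q)"
    using assms by (simp add: powr_diff field_simps)
  finally show ?thesis .
qed

lemma powr_secant_slope_antimono:
  fixes b p q w :: real
  assumes "0 < b" "b < 1" "0 \<le> w" "w < q" "q < p"
  shows "(p powr b - q powr b) / (p - q) \<le> (q powr b - w powr b) / (q - w)"
proof -
  have q: "0 < q" using assms by simp
  have "(p powr b - q powr b) / (p - q) \<le> b * q powr (b - 1)"
    using powr_le_tangent[OF assms(1,2) q, of p] assms by (simp add: divide_le_eq)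
  also have "\<dots> \<le> (q powr b - w powr b) / (q - w)"
    using powr_le_tangent[OF assms(1,2) q, of w] assms
    by (simp add: le_divide_eq right_diff_distrib)
  finally show ?thesis .
qed

lemma tstep_eq:
  assumes "0 < r"
  shows "tstep T n r j = T / real n powr r * (real (Suc j) powr r - real j powr r)"
proof -
  have "tgrid T n r k = T / real n powr r * real k powr r" for k
    using assms by (simp add: tgrid_def powr_divide)
  then show ?thesis
    by (simp add: tstep_def right_diff_distrib)
qed

lemma tstep_powr_acoef_eq:
  fixes a r T :: real
  assumes "0 \<le> T" "0 < r" "j < l"
  shows "tstep T n r j powr (-a) * acoef a r j l =
    (T / real n powr r) powr (-a) *
     (((real l powr r - real j powr r) powr (1 - a) - (real l powr r - real (Suc j) powr r) powr (1 - a))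
       / (real (Suc j) powr r - real j powr r))"
proof -
  define d where "d = real (Suc j) powr r - real j powr r"
  define C where "C = T / real n powr r"
  define U where "U = real l powr r"
  have d: "0 < d"
    unfolding d_def using assms by (simp add: powr_less_mono2)
  have U: "real j powr r \<le> U" "real (Suc j) powr r \<le> U"
    unfolding U_def using assms by (simp_all add: powr_mono2)
  have "tstep T n r j = C * d"
    using assms by (simp add: tstep_eq C_def d_def)
  moreover have "0 \<le> C"
    using assms by (simp add: C_def)
  ultimately have tstep_powr: "tstep T n r j powr (-a) = C powr (-a) * d powr (-a)"
    using d by (simp add: powr_mult)
  have acoef_eq: "acoef a r j l =
      ((U - real j powr r) powr (1 - a) - (U - real (Suc j) powr r) powr (1 - a)) / d powr (1 - a)"
    unfolding acoef_def U_def[symmetric] d_def[symmetric]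
    using U d powr_divide[of "U - real j powr r" d "1 - a"]
      powr_divide[of "U - real (Suc j) powr r" d "1 - a"]
    by (simp add: diff_divide_distrib)
  have d_powr: "d powr (-a) / d powr (1 - a) = 1 / d"
    using d by (simp add: powr_minus_divide divide_simps flip: powr_add)
  have "tstep T n r j powr (-a) * acoef a r j l = C powr (-a) * (d powr (-a) / d powr (1 - a)) *
      ((U - real j powr r) powr (1 - a) - (U - real (Suc j) powr r) powr (1 - a))"
    unfolding tstep_powr acoef_eq by simp
  also have "\<dots> = C powr (-a) *
      (((U - real j powr r) powr (1 - a) - (U - real (Suc j) powr r) powr (1 - a)) / d)"
    unfolding d_powr by simp
  finally show ?thesis
    unfolding C_def U_def d_def .
qed

definition l1_weight :: "real \<Rightarrow> real \<Rightarrow> nat \<Rightarrow> real \<Rightarrow> nat \<Rightarrow> nat \<Rightarrow> real" where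
  "l1_weight \<alpha> T n r l j = tstep T n r j powr (-\<alpha>) * acoef \<alpha> r j l / Gamma (2 - \<alpha>)"

lemma l1_weight_pos:
  fixes \<alpha> r T :: real
  assumes "0 < \<alpha>" "\<alpha> < 1" "0 < r" "0 < T" "1 \<le> n" "j < l"
  shows "0 < l1_weight \<alpha> T n r l j"
proof -
  have "real j powr r < real (Suc j) powr r" "real (Suc j) powr r \<le> real l powr r"
    using assms by (simp_all add: powr_less_mono2 powr_mono2)
  then have "(real l powr r - real (Suc j) powr r) powr (1 - \<alpha>)
      < (real l powr r - real j powr r) powr (1 - \<alpha>)"
    using assms by (intro powr_less_mono2) auto
  then show ?thesis
    using assms \<open>real j powr r < _\<close>
    by (simp add: l1_weight_def tstep_powr_acoef_eq)
qed

lemma l1_weight_mono: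
  fixes \<alpha> r T :: real
  assumes "0 < \<alpha>" "\<alpha> < 1" "0 < r" "0 < T" "1 \<le> n" "Suc j < l"
  shows "l1_weight \<alpha> T n r l j \<le> l1_weight \<alpha> T n r l (Suc j)"
proof -
  define U where "U = real l powr r"
  have "real j powr r < real (Suc j) powr r" "real (Suc j) powr r < real (Suc (Suc j)) powr r"
    "real (Suc (Suc j)) powr r \<le> U"
    unfolding U_def using assms by (simp_all add: powr_less_mono2 powr_mono2)
  then have "((U - real j powr r) powr (1 - \<alpha>) - (U - real (Suc j) powr r) powr (1 - \<alpha>))
        / ((U - real j powr r) - (U - real (Suc j) powr r))
      \<le> ((U - real (Suc j) powr r) powr (1 - \<alpha>) - (U - real (Suc (Suc j)) powr r) powr (1 - \<alpha>))
        / ((U - real (Suc j) powr r) - (U - real (Suc (Suc j)) powr r))"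
    using assms by (intro powr_secant_slope_antimono) auto
  then have "tstep T n r j powr (-\<alpha>) * acoef \<alpha> r j l
      \<le> tstep T n r (Suc j) powr (-\<alpha>) * acoef \<alpha> r (Suc j) l"
    using assms Suc_lessD[OF assms(6)]
    by (simp add: tstep_powr_acoef_eq U_def mult_left_mono flip: times_divide_eq_right)
  then show ?thesis
    unfolding l1_weight_def using assms by (simp add: divide_right_mono)
qed

lemma sum_weighted_increments_by_parts:
  fixes c E :: "nat \<Rightarrow> real"
  shows "(\<Sum>j<Suc m. c j * (E (Suc j) - E j))
    = c m * E (Suc m) - (c 0 * E 0 + (\<Sum>j<m. (c (Suc j) - c j) * E (Suc j)))"
  by (induction m) (simp_all add: algebra_simps)

lemma history_bound_mono_weights:
  fixes c E :: "nat \<Rightarrow> real"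
  assumes "0 \<le> c 0" "\<And>j. j < m \<Longrightarrow> c j \<le> c (Suc j)" "\<And>j. j \<le> m \<Longrightarrow> \<bar>E j\<bar> \<le> M"
  shows "\<bar>c 0 * E 0 + (\<Sum>j<m. (c (Suc j) - c j) * E (Suc j))\<bar> \<le> c m * M"
proof -
  have "\<bar>c 0 * E 0 + (\<Sum>j<m. (c (Suc j) - c j) * E (Suc j))\<bar>
      \<le> \<bar>c 0 * E 0\<bar> + (\<Sum>j<m. \<bar>(c (Suc j) - c j) * E (Suc j)\<bar>)"
    using abs_triangle_ineq[of "c 0 * E 0" "\<Sum>j<m. (c (Suc j) - c j) * E (Suc j)"]
      sum_abs[of "\<lambda>j. (c (Suc j) - c j) * E (Suc j)" "{..<m}"] by linarith
  also have "\<dots> \<le> c 0 * M + (\<Sum>j<m. (c (Suc j) - c j) * M)"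
    using assms by (intro add_mono sum_mono) (auto simp: abs_mult intro!: mult_left_mono)
  also have "\<dots> = c m * M"
    by (simp add: sum_lessThan_telescope flip: sum_distrib_right) (simp add: algebra_simps)
  finally show ?thesis .
qed

lemma abs_le_by_maximum_principle:
  fixes c A B x y z R M :: real
  assumes "0 < c" "0 \<le> A" "0 \<le> B" "(c + A + B) * x = A * y + B * z + R"
    and "\<bar>y\<bar> \<le> \<bar>x\<bar>" "\<bar>z\<bar> \<le> \<bar>x\<bar>" "\<bar>R\<bar> \<le> c * M"
  shows "\<bar>x\<bar> \<le> M"
proof -
  have "(c + A + B) * \<bar>x\<bar> = \<bar>A * y + B * z + R\<bar>"
    using assms(1-3) by (simp flip: assms(4) add: abs_mult)
  also have "\<dots> \<le> A * \<bar>y\<bar> + B * \<bar>z\<bar> + \<bar>R\<bar>"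
    using assms(2,3) abs_triangle_ineq[of "A * y + B * z" R] abs_triangle_ineq[of "A * y" "B * z"]
    by (simp add: abs_mult)
  also have "\<dots> \<le> (A + B) * \<bar>x\<bar> + c * M"
    using assms(2,3,5-7) mult_left_mono[of "\<bar>y\<bar>" "\<bar>x\<bar>" A] mult_left_mono[of "\<bar>z\<bar>" "\<bar>x\<bar>" B]
    by (simp add: algebra_simps)
  finally show ?thesis
    using assms(1) by (simp add: algebra_simps)
qed

lemma abs_le_errnorm: "i \<in> {1..K-1} \<Longrightarrow> \<bar>Y i l - Y' i l\<bar> \<le> errnorm K Y Y' l"
  unfolding errnorm_def by (intro Max_ge) auto

lemma errnorm_attained:
  assumes "2 \<le> K"
  obtains i where "i \<in> {1..K-1}" "errnorm K Y Y' l = \<bar>Y i l - Y' i l\<bar>"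
proof -
  have "errnorm K Y Y' l \<in> (\<lambda>i. \<bar>Y i l - Y' i l\<bar>) ` {1..K-1}"
    unfolding errnorm_def using assms by (intro Max_in) auto
  then show ?thesis
    using that by blast
qed

lemma abs_error_le_errnorm:
  assumes "scheme_sol \<alpha> lam v D T L n K r f g Y" "scheme_sol \<alpha> lam v D T L n K r f g' Y'"
    and "l \<in> {1..n}" "2 \<le> K" "k \<le> K"
  shows "\<bar>Y k l - Y' k l\<bar> \<le> errnorm K Y Y' l"
proof (cases "k = 0 \<or> k = K")
  case True
  have "(1::nat) \<in> {1..K-1}"
    using assms(4) by simp
  then have "0 \<le> errnorm K Y Y' l"
    by (rule order_trans[OF abs_ge_zero abs_le_errnorm])
  moreover have "Y 0 l = 0" "Y K l = 0" "Y' 0 l = 0" "Y' K l = 0"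
    using assms(1-3) unfolding scheme_sol_def by auto
  ultimately show ?thesis
    using True by auto
next
  case False
  with assms(5) show ?thesis
    by (intro abs_le_errnorm) auto
qed

lemma scheme_sol_error_eq:
  fixes Y Y' :: "nat \<Rightarrow> nat \<Rightarrow> real"
  assumes "scheme_sol \<alpha> lam v D T L n K r f g Y" "scheme_sol \<alpha> lam v D T L n K r f g' Y'"
    and "i \<in> {1..K-1}" "l \<in> {1..n}"
  defines "h \<equiv> L / real K" and "e \<equiv> \<lambda>i j. Y i j - Y' i j"
  shows "(\<Sum>j<l. l1_weight \<alpha> T n r l j * (e i (Suc j) - e i j))
    = (D / h^2 - v / (2 * h)) * e (i + 1) l + (D / h^2 + v / (2 * h)) * e (i - 1) l
      - 2 * D / h^2 * e i l"
proof -
  define F where "F = exp (lam * tgrid T n r l) * f (xgrid L K i) (tgrid T n r l)"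
  have scheme_eq: "1 / Gamma (2 - \<alpha>) * (\<Sum>j<l. tstep T n r j powr (-\<alpha>) * acoef \<alpha> r j l * (Z i (Suc j) - Z i j))
      = - v * (Z (i + 1) l - Z (i - 1) l) / (2 * h) + D * (Z (i + 1) l - 2 * Z i l + Z (i - 1) l) / h^2 + F"
    if "scheme_sol \<alpha> lam v D T L n K r f g\<^sub>0 Z" for Z g\<^sub>0
    using that assms(3,4) unfolding scheme_sol_def h_def F_def by blast
  have "(\<Sum>j<l. l1_weight \<alpha> T n r l j * (e i (Suc j) - e i j))
      = 1 / Gamma (2 - \<alpha>) * (\<Sum>j<l. tstep T n r j powr (-\<alpha>) * acoef \<alpha> r j l * (Y i (Suc j) - Y i j))
      - 1 / Gamma (2 - \<alpha>) * (\<Sum>j<l. tstep T n r j powr (-\<alpha>) * acoef \<alpha> r j l * (Y' i (Suc j) - Y' i j))"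
    unfolding l1_weight_def e_def sum_distrib_left sum_subtractf[symmetric]
    by (rule sum.cong) (simp_all add: divide_inverse algebra_simps)
  also have "\<dots> = (D / h^2 - v / (2 * h)) * e (i + 1) l + (D / h^2 + v / (2 * h)) * e (i - 1) l
      - 2 * D / h^2 * e i l"
    unfolding scheme_eq[OF assms(1)] scheme_eq[OF assms(2)] e_def
    by (simp add: algebra_simps diff_divide_distrib add_divide_distrib)
  finally show ?thesis .
qed

lemma errnorm_le_initial_step:
  fixes \<alpha> v D T L r :: real and Y Y' :: "nat \<Rightarrow> nat \<Rightarrow> real"
  assumes "0 < \<alpha>" "\<alpha> < 1" "0 < v" "0 < D" "0 < T" "0 < L" "1 \<le> n" "2 \<le> K" "0 < r"
    and mesh: "L / real K < 2 * D / v"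
    and Y: "scheme_sol \<alpha> lam v D T L n K r f g Y" and Y': "scheme_sol \<alpha> lam v D T L n K r f g' Y'"
    and l: "l \<in> {1..n}"
    and history: "\<And>j. j < l \<Longrightarrow> errnorm K Y Y' j \<le> errnorm K Y Y' 0"
  shows "errnorm K Y Y' l \<le> errnorm K Y Y' 0"
proof -
  define h where "h = L / real K"
  define e where "e i j = Y i j - Y' i j" for i j
  define c where "c = l1_weight \<alpha> T n r l"
  define A where "A = D / h^2 - v / (2 * h)"
  define B where "B = D / h^2 + v / (2 * h)"
  obtain i where i: "i \<in> {1..K-1}" and max: "errnorm K Y Y' l = \<bar>e i l\<bar>"
    using errnorm_attained[OF \<open>2 \<le> K\<close>] unfolding e_def by metis
  obtain m where l_eq: "l = Suc m"
    using l by (cases l) auto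
  have "0 < h" "h * v < 2 * D"
    using assms(3,6,8) mesh by (simp_all add: h_def field_simps)
  then have "0 \<le> A" "0 \<le> B"
    using assms(3,4) by (simp_all add: A_def B_def field_simps power2_eq_square)
  have c_mono: "c j \<le> c (Suc j)" if "j < m" for j
    using assms that by (simp add: c_def l_eq l1_weight_mono)
  have "0 < c 0" "0 < c m"
    using assms l_eq by (simp_all add: c_def l1_weight_pos)
  define R where "R = c 0 * e i 0 + (\<Sum>j<m. (c (Suc j) - c j) * e i (Suc j))"
  have R_bound: "\<bar>R\<bar> \<le> c m * errnorm K Y Y' 0"
    unfolding R_def using \<open>0 < c 0\<close> c_mono
  proof (intro history_bound_mono_weights)
    show "\<bar>e i j\<bar> \<le> errnorm K Y Y' 0" if "j \<le> m" for j
      using abs_le_errnorm[OF i, of Y j Y'] history[of j] that l_eq unfolding e_def by simp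
  qed auto
  have "(\<Sum>j<l. c j * (e i (Suc j) - e i j)) = A * e (i + 1) l + B * e (i - 1) l - 2 * D / h^2 * e i l"
    using scheme_sol_error_eq[OF Y Y' i l] unfolding A_def B_def c_def e_def h_def .
  also have "2 * D / h^2 = A + B"
    by (simp add: A_def B_def)
  finally have "c m * e i l - R = A * e (i + 1) l + B * e (i - 1) l - (A + B) * e i l"
    unfolding l_eq R_def sum_weighted_increments_by_parts .
  then have balance: "(c m + A + B) * e i l = A * e (i + 1) l + B * e (i - 1) l + R"
    by (simp add: algebra_simps)
  have neighbour_bound: "\<bar>e k l\<bar> \<le> \<bar>e i l\<bar>" if "k \<le> K" for k
    using abs_error_le_errnorm[OF Y Y' l \<open>2 \<le> K\<close> that] max unfolding e_def by simp
  have "\<bar>e (i + 1) l\<bar> \<le> \<bar>e i l\<bar>" "\<bar>e (i - 1) l\<bar> \<le> \<bar>e i l\<bar>"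
    using i by (auto intro!: neighbour_bound)
  then have "\<bar>e i l\<bar> \<le> errnorm K Y Y' 0"
    using R_bound by (rule abs_le_by_maximum_principle[OF \<open>0 < c m\<close> \<open>0 \<le> A\<close> \<open>0 \<le> B\<close> balance])
  then show ?thesis
    unfolding max .
qed

theorem mainTheorem1:
  fixes \<alpha> lam v D T L r :: real and n K :: nat
    and f :: "real \<Rightarrow> real \<Rightarrow> real" and g g' :: "real \<Rightarrow> real"
    and Y Y' :: "nat \<Rightarrow> nat \<Rightarrow> real"
  assumes "0 < \<alpha>" "\<alpha> < 1" "0 \<le> lam" "0 < v" "0 < D" "0 < T" "0 < L"
    and "1 \<le> n" "2 \<le> K" "1 \<le> r"
    and "continuous_on ({0..L} \<times> {0..T}) (\<lambda>(x, t). f x t)"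
    and "continuous_on {0..L} g" "continuous_on {0..L} g'"
    and "L / real K < 2 * D / v"
    and "scheme_sol \<alpha> lam v D T L n K r f g Y"
    and "scheme_sol \<alpha> lam v D T L n K r f g' Y'"
  shows "\<forall>l\<in>{1..n}. errnorm K Y Y' l \<le> errnorm K Y Y' 0"
proof -
  have "0 < r"
    using \<open>1 \<le> r\<close> by simp
  have "errnorm K Y Y' l \<le> errnorm K Y Y' 0" if "l \<le> n" for l
    using that
  proof (induction l rule: less_induct)
    case (less l)
    show ?case
    proof (cases "l = 0")
      case False
      with less.prems have l: "l \<in> {1..n}"
        by simp
      have history: "errnorm K Y Y' j \<le> errnorm K Y Y' 0" if "j < l" for j
        using less.IH[of j] less.prems that by simp
      from assms(1,2,4-9) \<open>0 < r\<close> assms(14-16) l history show ?thesis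
        by (rule errnorm_le_initial_step)
    qed simp
  qed
  then show ?thesis
    by simp
qed

end
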